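(* The functions $\mu\mapsto\Pi(D^\mu,C^\mu)$ and $\mu\mapsto G(D^\mu,C^\mu)$ are non-increasing on $[0,\infty)$.
   Context: Let $(X,Y)\sim P_{XY}$ on $\mathcal X\times\mathcal Y$, $\alpha\in(0,1)$. $\mathcal I$ is a finite collection of subsets of $\mathcal Y$ enumerated in a fixed lexicographic order, $w:\mathcal I\to(0,B)$ a bounded positive weight. For $C\in\mathcal I$ let $p_C(x)=\mathbb P(Y\in C\mid X=x)$, $\ell_{x,C}(\mu)=w(C)p_C(x)+\mu(p_C(x)-(1-\alpha))$ for $\mu\ge0$, $\mathcal U_x(\mu)=\max_{C\in\mathcal I}\ell_{x,C}(\mu)$. $C^\mu(x)$ is a maximizer of $\ell_{x,C}(\mu)$ over $C\in\mathcal I$, ties broken in favor of the largest $w(C)$ and then smallest index; $D^\mu(x)=\mathbb 1\{\mathcal U_x(\mu)\ge0\}$. For $D:\mathcal X\to\{0,1\}$, $C:\mathcal X\to\mathcal I$: $\Pi(D,C)=\mathbb E[w(C(X))p_{C(X)}(X)D(X)]$, $G(D,C)=\mathbb E[(1-p_{C(X)}(X)-\alpha)D(X)]$. *)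

theory Defs
  imports "HOL-Probability.Probability"
begin

definition cond_prob_version ::
  "'w measure \<Rightarrow> 'x measure \<Rightarrow> ('w \<Rightarrow> 'x) \<Rightarrow> ('w \<Rightarrow> 'y) \<Rightarrow> 'y set \<Rightarrow> ('x \<Rightarrow> real) \<Rightarrow> bool"
where
  "cond_prob_version M MX X Y C q \<longleftrightarrow>
     q \<in> borel_measurable MX \<and>
     integrable M (\<lambda>\<omega>. q (X \<omega>)) \<and>
     (\<forall>A\<in>sets MX. (\<integral>\<omega>. indicator A (X \<omega>) * q (X \<omega>) \<partial>M)
                    = measure M {\<omega>\<in>space M. X \<omega> \<in> A \<and> Y \<omega> \<in> C})"

definition ell :: "('y set \<Rightarrow> 'x \<Rightarrow> real) \<Rightarrow> ('y set \<Rightarrow> real) \<Rightarrow> real \<Rightarrow> 'x \<Rightarrow> 'y set \<Rightarrow> real \<Rightarrow> real"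
where "ell p w \<alpha> x C \<mu> = w C * p C x + \<mu> * (p C x - (1 - \<alpha>))"

definition Uval :: "'y set list \<Rightarrow> ('y set \<Rightarrow> 'x \<Rightarrow> real) \<Rightarrow> ('y set \<Rightarrow> real) \<Rightarrow> real \<Rightarrow> real \<Rightarrow> 'x \<Rightarrow> real"
where "Uval Is p w \<alpha> \<mu> x = Max ((\<lambda>C. ell p w \<alpha> x C \<mu>) ` set Is)"

text \<open>Index of the chosen maximizer: among maximizers, largest weight, then smallest index.\<close>
definition Cidx :: "'y set list \<Rightarrow> ('y set \<Rightarrow> 'x \<Rightarrow> real) \<Rightarrow> ('y set \<Rightarrow> real) \<Rightarrow> real \<Rightarrow> real \<Rightarrow> 'x \<Rightarrow> nat"
where "Cidx Is p w \<alpha> \<mu> x =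
  (LEAST i. i < length Is \<and> ell p w \<alpha> x (Is ! i) \<mu> = Uval Is p w \<alpha> \<mu> x \<and>
     (\<forall>j<length Is. ell p w \<alpha> x (Is ! j) \<mu> = Uval Is p w \<alpha> \<mu> x \<longrightarrow> w (Is ! j) \<le> w (Is ! i)))"

definition Cmu :: "'y set list \<Rightarrow> ('y set \<Rightarrow> 'x \<Rightarrow> real) \<Rightarrow> ('y set \<Rightarrow> real) \<Rightarrow> real \<Rightarrow> real \<Rightarrow> 'x \<Rightarrow> 'y set"
where "Cmu Is p w \<alpha> \<mu> x = Is ! Cidx Is p w \<alpha> \<mu> x"

definition Dmu :: "'y set list \<Rightarrow> ('y set \<Rightarrow> 'x \<Rightarrow> real) \<Rightarrow> ('y set \<Rightarrow> real) \<Rightarrow> real \<Rightarrow> real \<Rightarrow> 'x \<Rightarrow> real"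
where "Dmu Is p w \<alpha> \<mu> x = (if Uval Is p w \<alpha> \<mu> x \<ge> 0 then 1 else 0)"

definition PiVal :: "'w measure \<Rightarrow> ('w \<Rightarrow> 'x) \<Rightarrow> ('y set \<Rightarrow> 'x \<Rightarrow> real) \<Rightarrow> ('y set \<Rightarrow> real)
   \<Rightarrow> ('x \<Rightarrow> real) \<Rightarrow> ('x \<Rightarrow> 'y set) \<Rightarrow> real"
where "PiVal M X p w D C = (\<integral>\<omega>. w (C (X \<omega>)) * p (C (X \<omega>)) (X \<omega>) * D (X \<omega>) \<partial>M)"

definition GVal :: "'w measure \<Rightarrow> ('w \<Rightarrow> 'x) \<Rightarrow> ('y set \<Rightarrow> 'x \<Rightarrow> real) \<Rightarrow> real
   \<Rightarrow> ('x \<Rightarrow> real) \<Rightarrow> ('x \<Rightarrow> 'y set) \<Rightarrow> real"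
where "GVal M X p \<alpha> D C = (\<integral>\<omega>. (1 - p (C (X \<omega>)) (X \<omega>) - \<alpha>) * D (X \<omega>) \<partial>M)"

end

theory Submission
  imports Defs
begin

text \<open>For fixed x, every \<open>\<ell>\<^sub>x\<^sub>,\<^sub>C\<close> is affine in \<mu> with intercept \<open>w(C) p\<^sub>C(x)\<close> and slope
  \<open>p\<^sub>C(x) - (1 - \<alpha>)\<close>. Comparing the optimality of \<open>C\<^sup>\<mu>\<^sup>1(x)\<close> at \<mu>1 with that of
  \<open>C\<^sup>\<mu>\<^sup>2(x)\<close> at \<mu>2 (an exchange argument) shows that raising \<mu> can only raise the slope
  and lower the intercept of the selected set. A positive slope forces a positive intercept,
  so an affine \<open>\<ell>\<^sub>x\<^sub>,\<^sub>C\<close> that is nonnegative at \<mu>2 is nonnegative on all of \<open>[0, \<mu>2]\<close>: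
  the acceptance region \<open>D\<^sup>\<mu> = 1\<close> shrinks as \<mu> grows, and a point leaving it had
  nonnegative intercept and nonpositive slope. Hence both integrands decrease pointwise
  in \<mu>, and integrating gives the claim.\<close>

lemma affine_maximizers_exchange:
  fixes a1 a2 b1 b2 \<mu>1 \<mu>2 :: real
  assumes opt1: "a2 + \<mu>1 * b2 \<le> a1 + \<mu>1 * b1" and opt2: "a1 + \<mu>2 * b1 \<le> a2 + \<mu>2 * b2"
    and "0 \<le> \<mu>1" and "\<mu>1 < \<mu>2"
  shows "b1 \<le> b2 \<and> a2 \<le> a1"
proof -
  have "0 \<le> (\<mu>2 - \<mu>1) * (b2 - b1)" using opt1 opt2 by (simp add: algebra_simps)
  with \<open>\<mu>1 < \<mu>2\<close> have "b1 \<le> b2" by (simp add: zero_le_mult_iff)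
  moreover have "0 \<le> \<mu>1 * (b2 - b1)" using \<open>0 \<le> \<mu>1\<close> \<open>b1 \<le> b2\<close> by simp
  ultimately show ?thesis using opt1 by (simp add: algebra_simps)
qed

lemma ell_le_Uval: "C \<in> set Is \<Longrightarrow> ell p w \<alpha> x C \<mu> \<le> Uval Is p w \<alpha> \<mu> x"
  unfolding Uval_def by (intro Max_ge) auto

lemma Cidx_spec:
  assumes "Is \<noteq> []"
  shows "Cidx Is p w \<alpha> \<mu> x < length Is \<and> ell p w \<alpha> x (Cmu Is p w \<alpha> \<mu> x) \<mu> = Uval Is p w \<alpha> \<mu> x"
proof -
  let ?U = "Uval Is p w \<alpha> \<mu> x"
  define S where "S = {i. i < length Is \<and> ell p w \<alpha> x (Is ! i) \<mu> = ?U}"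
  have "finite (set Is)" "set Is \<noteq> {}" using assms by simp_all
  then obtain C where "C \<in> set Is" "Max ((\<lambda>C. ell p w \<alpha> x C \<mu>) ` set Is) = ell p w \<alpha> x C \<mu>"
    by (rule obtains_MAX)
  then have "S \<noteq> {}" by (auto simp: S_def Uval_def in_set_conv_nth)
  have "finite S" by (simp add: S_def)
  from this \<open>S \<noteq> {}\<close> obtain i where "i \<in> S" and i_max: "Max ((\<lambda>j. w (Is ! j)) ` S) = w (Is ! i)"
    by (rule obtains_MAX)
  have "w (Is ! j) \<le> w (Is ! i)" if "j \<in> S" for j
    using Max_ge[of "(\<lambda>j. w (Is ! j)) ` S" "w (Is ! j)"] \<open>finite S\<close> that i_max by simp
  with \<open>i \<in> S\<close> have "\<exists>i. i < length Is \<and> ell p w \<alpha> x (Is ! i) \<mu> = ?U \<and>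
     (\<forall>j<length Is. ell p w \<alpha> x (Is ! j) \<mu> = ?U \<longrightarrow> w (Is ! j) \<le> w (Is ! i))"
    by (auto simp: S_def)
  from LeastI_ex[OF this] show ?thesis by (simp add: Cidx_def Cmu_def)
qed

lemma Cmu_in_set: "Is \<noteq> [] \<Longrightarrow> Cmu Is p w \<alpha> \<mu> x \<in> set Is"
  using Cidx_spec[of Is p w \<alpha> \<mu> x] by (simp add: Cmu_def)

lemma ell_Cmu: "Is \<noteq> [] \<Longrightarrow> ell p w \<alpha> x (Cmu Is p w \<alpha> \<mu> x) \<mu> = Uval Is p w \<alpha> \<mu> x"
  using Cidx_spec[of Is p w \<alpha> \<mu> x] by (rule conjunct2)

lemma ell_le_ell_Cmu:
  "Is \<noteq> [] \<Longrightarrow> C \<in> set Is \<Longrightarrow> ell p w \<alpha> x C \<mu> \<le> ell p w \<alpha> x (Cmu Is p w \<alpha> \<mu> x) \<mu>"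
  by (simp add: ell_Cmu ell_le_Uval)

lemma Cmu_exchange:
  assumes "Is \<noteq> []" and "0 \<le> \<mu>1" and "\<mu>1 \<le> \<mu>2"
  shows "p (Cmu Is p w \<alpha> \<mu>1 x) x \<le> p (Cmu Is p w \<alpha> \<mu>2 x) x
    \<and> w (Cmu Is p w \<alpha> \<mu>2 x) * p (Cmu Is p w \<alpha> \<mu>2 x) x \<le> w (Cmu Is p w \<alpha> \<mu>1 x) * p (Cmu Is p w \<alpha> \<mu>1 x) x"
proof (cases "\<mu>1 = \<mu>2")
  case False
  let ?C1 = "Cmu Is p w \<alpha> \<mu>1 x" and ?C2 = "Cmu Is p w \<alpha> \<mu>2 x"
  have "ell p w \<alpha> x ?C2 \<mu>1 \<le> ell p w \<alpha> x ?C1 \<mu>1" "ell p w \<alpha> x ?C1 \<mu>2 \<le> ell p w \<alpha> x ?C2 \<mu>2"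
    using \<open>Is \<noteq> []\<close> by (simp_all add: ell_le_ell_Cmu Cmu_in_set)
  then have "p ?C1 x - (1 - \<alpha>) \<le> p ?C2 x - (1 - \<alpha>) \<and> w ?C2 * p ?C2 x \<le> w ?C1 * p ?C1 x"
    using False assms by (intro affine_maximizers_exchange) (simp_all add: ell_def order.strict_iff_order)
  then show ?thesis by simp
qed simp

lemma ell_nonneg_antimono:
  assumes "0 < w C" and "\<alpha> < 1" and "0 \<le> \<mu>1" and "\<mu>1 \<le> \<mu>2" and "0 \<le> ell p w \<alpha> x C \<mu>2"
  shows "0 \<le> ell p w \<alpha> x C \<mu>1"
proof (cases "p C x \<le> 1 - \<alpha>")
  case True
  then have "\<mu>2 * (p C x - (1 - \<alpha>)) \<le> \<mu>1 * (p C x - (1 - \<alpha>))"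
    using \<open>\<mu>1 \<le> \<mu>2\<close> by (intro mult_right_mono_neg) simp_all
  with \<open>0 \<le> ell p w \<alpha> x C \<mu>2\<close> show ?thesis by (simp add: ell_def)
next
  case False
  with \<open>0 < w C\<close> \<open>\<alpha> < 1\<close> have "0 < w C * p C x" by simp
  with False \<open>0 \<le> \<mu>1\<close> show ?thesis by (simp add: ell_def)
qed

lemma ell_sign_change:
  assumes "0 \<le> \<mu>1" and "\<mu>1 \<le> \<mu>2" and "0 \<le> ell p w \<alpha> x C \<mu>1" and "ell p w \<alpha> x C \<mu>2 < 0"
  shows "p C x \<le> 1 - \<alpha> \<and> 0 \<le> w C * p C x"
proof
  show slope: "p C x \<le> 1 - \<alpha>"
  proof (rule ccontr)
    assume "\<not> p C x \<le> 1 - \<alpha>"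
    then have "\<mu>1 * (p C x - (1 - \<alpha>)) \<le> \<mu>2 * (p C x - (1 - \<alpha>))"
      using \<open>\<mu>1 \<le> \<mu>2\<close> by (intro mult_right_mono) simp_all
    with assms(3,4) show False by (simp add: ell_def)
  qed
  have "\<mu>1 * (p C x - (1 - \<alpha>)) \<le> 0"
    using slope \<open>0 \<le> \<mu>1\<close> by (simp add: mult_nonneg_nonpos)
  with assms(3) show "0 \<le> w C * p C x" by (simp add: ell_def)
qed

lemma Uval_nonneg_antimono:
  assumes "Is \<noteq> []" and w_pos: "\<And>C. C \<in> set Is \<Longrightarrow> 0 < w C" and "\<alpha> < 1"
    and "0 \<le> \<mu>1" and "\<mu>1 \<le> \<mu>2" and "0 \<le> Uval Is p w \<alpha> \<mu>2 x"
  shows "0 \<le> Uval Is p w \<alpha> \<mu>1 x"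
proof -
  let ?C = "Cmu Is p w \<alpha> \<mu>2 x"
  have "?C \<in> set Is" using \<open>Is \<noteq> []\<close> by (rule Cmu_in_set)
  have "0 \<le> ell p w \<alpha> x ?C \<mu>2" using assms by (simp add: ell_Cmu)
  with w_pos[OF \<open>?C \<in> set Is\<close>] assms(3-5) have "0 \<le> ell p w \<alpha> x ?C \<mu>1"
    by (rule ell_nonneg_antimono)
  also have "\<dots> \<le> Uval Is p w \<alpha> \<mu>1 x" using \<open>?C \<in> set Is\<close> by (rule ell_le_Uval)
  finally show ?thesis .
qed

lemma Uval_sign_change:
  assumes "Is \<noteq> []" and "0 \<le> \<mu>1" and "\<mu>1 \<le> \<mu>2"
    and "0 \<le> Uval Is p w \<alpha> \<mu>1 x" and "Uval Is p w \<alpha> \<mu>2 x < 0"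
  shows "p (Cmu Is p w \<alpha> \<mu>1 x) x \<le> 1 - \<alpha> \<and> 0 \<le> w (Cmu Is p w \<alpha> \<mu>1 x) * p (Cmu Is p w \<alpha> \<mu>1 x) x"
proof (rule ell_sign_change[of \<mu>1 \<mu>2 p w \<alpha> x "Cmu Is p w \<alpha> \<mu>1 x"])
  let ?C = "Cmu Is p w \<alpha> \<mu>1 x"
  show "0 \<le> ell p w \<alpha> x ?C \<mu>1" using assms by (simp add: ell_Cmu)
  have "ell p w \<alpha> x ?C \<mu>2 \<le> Uval Is p w \<alpha> \<mu>2 x" using \<open>Is \<noteq> []\<close> by (intro ell_le_Uval Cmu_in_set)
  with assms show "ell p w \<alpha> x ?C \<mu>2 < 0" by linarith
qed fact+

lemma selected_integrands_antimono:
  assumes "Is \<noteq> []" and "\<And>C. C \<in> set Is \<Longrightarrow> 0 < w C" and "\<alpha> < 1"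
    and "0 \<le> \<mu>1" and "\<mu>1 \<le> \<mu>2"
  shows "w (Cmu Is p w \<alpha> \<mu>2 x) * p (Cmu Is p w \<alpha> \<mu>2 x) x * Dmu Is p w \<alpha> \<mu>2 x
           \<le> w (Cmu Is p w \<alpha> \<mu>1 x) * p (Cmu Is p w \<alpha> \<mu>1 x) x * Dmu Is p w \<alpha> \<mu>1 x" (is ?Pi)
    and "(1 - p (Cmu Is p w \<alpha> \<mu>2 x) x - \<alpha>) * Dmu Is p w \<alpha> \<mu>2 x
           \<le> (1 - p (Cmu Is p w \<alpha> \<mu>1 x) x - \<alpha>) * Dmu Is p w \<alpha> \<mu>1 x" (is ?G)
proof -
  have "?Pi \<and> ?G"
  proof (cases "0 \<le> Uval Is p w \<alpha> \<mu>2 x")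
    case True
    with Uval_nonneg_antimono[of Is w \<alpha> \<mu>1 \<mu>2 p x] assms have "0 \<le> Uval Is p w \<alpha> \<mu>1 x"
      by blast
    with True Cmu_exchange[OF assms(1,4,5), where p = p and w = w and \<alpha> = \<alpha> and x = x]
    show ?thesis by (simp add: Dmu_def)
  next
    case False
    with Uval_sign_change[OF assms(1,4,5), where p = p and w = w and \<alpha> = \<alpha> and x = x]
    show ?thesis by (auto simp: Dmu_def)
  qed
  then show ?Pi ?G by simp_all
qed

lemma integrable_finite_selection:
  fixes f :: "'i \<Rightarrow> 'a \<Rightarrow> real"
  assumes "finite S" and [measurable]: "sel \<in> measurable M (count_space UNIV)"
    and sel_in: "\<And>x. x \<in> space M \<Longrightarrow> sel x \<in> S" and f: "\<And>i. i \<in> S \<Longrightarrow> integrable M (f i)"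
  shows "integrable M (\<lambda>x. f (sel x) x)"
proof -
  have sum_eq: "f (sel x) x = (\<Sum>i\<in>S. f i x * indicator {x \<in> space M. sel x = i} x)"
    if "x \<in> space M" for x
    using \<open>finite S\<close> sel_in[OF that] that by (simp add: indicator_def if_distrib[of "(*) _"] sum.delta)
  have "integrable M (\<lambda>x. \<Sum>i\<in>S. f i x * indicator {x \<in> space M. sel x = i} x)"
    using f by (intro Bochner_Integration.integrable_sum integrable_real_mult_indicator) simp_all
  then show ?thesis
    by (rule Bochner_Integration.integrable_cong[OF refl, THEN iffD2, rotated]) (rule sum_eq)
qed

lemma borel_measurable_Uval:
  assumes "\<And>C. C \<in> set Is \<Longrightarrow> p C \<in> borel_measurable MX"
  shows "(\<lambda>x. Uval Is p w \<alpha> \<mu> x) \<in> borel_measurable MX"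
  unfolding Uval_def
proof (rule borel_measurable_Max[OF finite_set])
  fix C assume "C \<in> set Is"
  with assms have [measurable]: "p C \<in> borel_measurable MX" .
  show "(\<lambda>x. ell p w \<alpha> x C \<mu>) \<in> borel_measurable MX" unfolding ell_def by measurable
qed

lemma measurable_Cidx:
  assumes "\<And>C. C \<in> set Is \<Longrightarrow> p C \<in> borel_measurable MX"
  shows "Cidx Is p w \<alpha> \<mu> \<in> measurable MX (count_space UNIV)"
proof -
  note [measurable] = borel_measurable_Uval[OF assms]
  have heaviest: "Measurable.pred MX (\<lambda>x. \<forall>C\<in>set Is. ell p w \<alpha> x C \<mu> = Uval Is p w \<alpha> \<mu> x \<longrightarrow> w C \<le> c)"
    for c
  proof (rule pred_intros_finite(3)[OF finite_set])
    fix C assume "C \<in> set Is"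
    note [measurable] = assms[OF this]
    show "Measurable.pred MX (\<lambda>x. ell p w \<alpha> x C \<mu> = Uval Is p w \<alpha> \<mu> x \<longrightarrow> w C \<le> c)"
      unfolding ell_def by measurable
  qed
  have "Measurable.pred MX (\<lambda>x. i < length Is \<and> ell p w \<alpha> x (Is ! i) \<mu> = Uval Is p w \<alpha> \<mu> x \<and>
      (\<forall>j<length Is. ell p w \<alpha> x (Is ! j) \<mu> = Uval Is p w \<alpha> \<mu> x \<longrightarrow> w (Is ! j) \<le> w (Is ! i)))" for i
  proof (cases "i < length Is")
    case True
    note [measurable] = assms[OF nth_mem[OF True]]
    have "Measurable.pred MX (\<lambda>x. ell p w \<alpha> x (Is ! i) \<mu> = Uval Is p w \<alpha> \<mu> x)"
      unfolding ell_def by measurable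
    with heaviest[of "w (Is ! i)", unfolded all_set_conv_all_nth] show ?thesis
      using True by (simp only: True simp_thms) (rule pred_intros_logic(3))
  qed simp
  then show ?thesis unfolding Cidx_def[abs_def] by (rule measurable_Least)
qed

lemma measurable_Cmu:
  assumes "\<And>C. C \<in> set Is \<Longrightarrow> p C \<in> borel_measurable MX"
  shows "Cmu Is p w \<alpha> \<mu> \<in> measurable MX (count_space UNIV)"
  unfolding Cmu_def[abs_def] using measurable_Cidx[OF assms] measurable_count_space
  by (rule measurable_compose)

lemma integrable_selected_integrand:
  assumes X: "X \<in> measurable M MX" and "Is \<noteq> []"
    and p_meas: "\<And>C. C \<in> set Is \<Longrightarrow> p C \<in> borel_measurable MX"
    and g_int: "\<And>C. C \<in> set Is \<Longrightarrow> integrable M (\<lambda>\<omega>. g C (X \<omega>))"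
  shows "integrable M (\<lambda>\<omega>. g (Cmu Is p w \<alpha> \<mu> (X \<omega>)) (X \<omega>) * Dmu Is p w \<alpha> \<mu> (X \<omega>))"
proof -
  have "integrable M (\<lambda>\<omega>. g (Cmu Is p w \<alpha> \<mu> (X \<omega>)) (X \<omega>))"
  proof (rule integrable_finite_selection[where S = "set Is" and f = "\<lambda>C \<omega>. g C (X \<omega>)"])
    show "(\<lambda>\<omega>. Cmu Is p w \<alpha> \<mu> (X \<omega>)) \<in> measurable M (count_space UNIV)"
      using X measurable_Cmu[OF p_meas] by (rule measurable_compose)
  qed (simp_all add: \<open>Is \<noteq> []\<close> Cmu_in_set g_int)
  moreover have "(\<lambda>\<omega>. Uval Is p w \<alpha> \<mu> (X \<omega>)) \<in> borel_measurable M"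
    using X borel_measurable_Uval[OF p_meas] by (rule measurable_compose)
  then have "{\<omega> \<in> space M. 0 \<le> Uval Is p w \<alpha> \<mu> (X \<omega>)} \<in> sets M"
    unfolding borel_measurable_iff_ge by blast
  ultimately have "integrable M (\<lambda>\<omega>. g (Cmu Is p w \<alpha> \<mu> (X \<omega>)) (X \<omega>)
      * indicator {\<omega> \<in> space M. 0 \<le> Uval Is p w \<alpha> \<mu> (X \<omega>)} \<omega>)"
    by (intro integrable_real_mult_indicator)
  then show ?thesis
    by (rule Bochner_Integration.integrable_cong[OF refl, THEN iffD1, rotated]) (simp add: Dmu_def)
qed

theorem corollary1:
  fixes M :: "'w measure" and MX :: "'x measure" and MY :: "'y measure"
    and X :: "'w \<Rightarrow> 'x" and Y :: "'w \<Rightarrow> 'y"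
    and Is :: "'y set list" and w :: "'y set \<Rightarrow> real" and B :: real and \<alpha> :: real
    and p :: "'y set \<Rightarrow> 'x \<Rightarrow> real"
  assumes "prob_space M"
    and "X \<in> measurable M MX" and "Y \<in> measurable M MY"
    and "0 < \<alpha>" and "\<alpha> < 1"
    and "Is \<noteq> []" and "distinct Is" and "set Is \<subseteq> sets MY"
    and "\<And>C. C \<in> set Is \<Longrightarrow> 0 < w C \<and> w C < B"
    and "\<And>C. C \<in> set Is \<Longrightarrow> cond_prob_version M MX X Y C (p C)"
  shows "(\<forall>\<mu>1 \<mu>2. 0 \<le> \<mu>1 \<longrightarrow> \<mu>1 \<le> \<mu>2 \<longrightarrow>
            PiVal M X p w (Dmu Is p w \<alpha> \<mu>2) (Cmu Is p w \<alpha> \<mu>2)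
              \<le> PiVal M X p w (Dmu Is p w \<alpha> \<mu>1) (Cmu Is p w \<alpha> \<mu>1))
       \<and> (\<forall>\<mu>1 \<mu>2. 0 \<le> \<mu>1 \<longrightarrow> \<mu>1 \<le> \<mu>2 \<longrightarrow>
            GVal M X p \<alpha> (Dmu Is p w \<alpha> \<mu>2) (Cmu Is p w \<alpha> \<mu>2)
              \<le> GVal M X p \<alpha> (Dmu Is p w \<alpha> \<mu>1) (Cmu Is p w \<alpha> \<mu>1))"
proof -
  interpret prob_space M by fact
  have p_meas: "p C \<in> borel_measurable MX" and p_int: "integrable M (\<lambda>\<omega>. p C (X \<omega>))"
    if "C \<in> set Is" for C
    using assms(10)[OF that] by (simp_all add: cond_prob_version_def)
  have w_pos: "0 < w C" if "C \<in> set Is" for C using assms(9)[OF that] by simp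
  have Pi_int: "integrable M (\<lambda>\<omega>. w (Cmu Is p w \<alpha> \<mu> (X \<omega>)) * p (Cmu Is p w \<alpha> \<mu> (X \<omega>)) (X \<omega>)
      * Dmu Is p w \<alpha> \<mu> (X \<omega>))" for \<mu>
    using integrable_selected_integrand[OF assms(2,6) p_meas, where g = "\<lambda>C x. w C * p C x"] p_int by simp
  have G_int: "integrable M (\<lambda>\<omega>. (1 - p (Cmu Is p w \<alpha> \<mu> (X \<omega>)) (X \<omega>) - \<alpha>) * Dmu Is p w \<alpha> \<mu> (X \<omega>))"
    for \<mu>
    using integrable_selected_integrand[OF assms(2,6) p_meas, where g = "\<lambda>C x. 1 - p C x - \<alpha>"] p_int by simp
  show ?thesis
    unfolding PiVal_def GVal_def
    using selected_integrands_antimono[OF assms(6) w_pos assms(5)]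
    by (auto intro!: integral_mono Pi_int G_int)
qed

end
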